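(* Let $A=B[x;\alpha,\delta]_p$ be a Poisson polynomial algebra over a field $k$ of characteristic zero, and assume $\alpha\delta=\delta(\alpha+s)$ for some $s\in k$. Then for all $a,b\in B$ and $n\ge0$, $$\delta^n(\{a,b\})=\sum_{l+m=n}\binom{n}{l}\Big(\{\delta^l(a),\delta^m(b)\}+m\,\delta^l\alpha(a)\,\delta^m(b)-l\,\delta^l(a)\,\delta^m\alpha(b)\Big).$$
   Context: If $B$ is a Poisson algebra, $\alpha$ a Poisson derivation of $B$ and $\delta$ a derivation of $B$ with $\delta(\{a,b\})=\{\delta(a),b\}+\{a,\delta(b)\}+\alpha(a)\delta(b)-\delta(a)\alpha(b)$ for $a,b\in B$, then $B[x;\alpha,\delta]_p$ is $B[x]$ with the unique Poisson bracket extending that of $B$ with $\{x,b\}=\alpha(b)x+\delta(b)$. *)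

theory Defs
  imports Main HOL.Vector_Spaces
begin

definition comm_algebra :: "('k::field \<Rightarrow> 'b::comm_ring_1 \<Rightarrow> 'b) \<Rightarrow> bool" where
  "comm_algebra scale \<longleftrightarrow> module scale \<and>
     (\<forall>c x y. scale c (x * y) = scale c x * y \<and> scale c (x * y) = x * scale c y)"

definition k_linear :: "('k::field \<Rightarrow> 'b::comm_ring_1 \<Rightarrow> 'b) \<Rightarrow> ('b \<Rightarrow> 'b) \<Rightarrow> bool" where
  "k_linear scale f \<longleftrightarrow> (\<forall>x y. f (x + y) = f x + f y) \<and> (\<forall>c x. f (scale c x) = scale c (f x))"

definition poisson_algebra ::
  "('k::field \<Rightarrow> 'b::comm_ring_1 \<Rightarrow> 'b) \<Rightarrow> ('b \<Rightarrow> 'b \<Rightarrow> 'b) \<Rightarrow> bool" where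
  "poisson_algebra scale br \<longleftrightarrow> comm_algebra scale \<and>
     (\<forall>a. k_linear scale (br a)) \<and> (\<forall>b. k_linear scale (\<lambda>a. br a b)) \<and>
     (\<forall>a b. br a b = - br b a) \<and>
     (\<forall>a b c. br a (br b c) + br b (br c a) + br c (br a b) = 0) \<and>
     (\<forall>a b c. br a (b * c) = br a b * c + b * br a c)"

definition derivation :: "('k::field \<Rightarrow> 'b::comm_ring_1 \<Rightarrow> 'b) \<Rightarrow> ('b \<Rightarrow> 'b) \<Rightarrow> bool" where
  "derivation scale d \<longleftrightarrow> k_linear scale d \<and> (\<forall>a b. d (a * b) = d a * b + a * d b)"

definition poisson_derivation ::
  "('k::field \<Rightarrow> 'b::comm_ring_1 \<Rightarrow> 'b) \<Rightarrow> ('b \<Rightarrow> 'b \<Rightarrow> 'b) \<Rightarrow> ('b \<Rightarrow> 'b) \<Rightarrow> bool" where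
  "poisson_derivation scale br a \<longleftrightarrow> derivation scale a \<and>
     (\<forall>x y. a (br x y) = br (a x) y + br x (a y))"

text \<open>The data (B, alpha, delta) define a Poisson polynomial algebra B[x;alpha,delta]_p.\<close>
definition poisson_poly_data ::
  "('k::field \<Rightarrow> 'b::comm_ring_1 \<Rightarrow> 'b) \<Rightarrow> ('b \<Rightarrow> 'b \<Rightarrow> 'b) \<Rightarrow> ('b \<Rightarrow> 'b) \<Rightarrow> ('b \<Rightarrow> 'b) \<Rightarrow> bool" where
  "poisson_poly_data scale br \<alpha> \<delta> \<longleftrightarrow> poisson_algebra scale br \<and>
     poisson_derivation scale br \<alpha> \<and> derivation scale \<delta> \<and>
     (\<forall>a b. \<delta> (br a b) = br (\<delta> a) b + br a (\<delta> b) + \<alpha> a * \<delta> b - \<delta> a * \<alpha> b)"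

end

theory Submission
  imports Defs
begin

text \<open>Write \<open>E l m\<close> for the summand
  \<open>{\<delta>^l a, \<delta>^m b} + m \<delta>^l(\<alpha> a) \<delta>^m b - l \<delta>^l a \<delta>^m(\<alpha> b)\<close>.
  Iterating the hypothesis on \<open>\<alpha>\<delta>\<close> gives \<open>\<alpha> \<delta>^l = \<delta>^l \<alpha> + l s \<delta>^l\<close>, and with it the
  twisted derivation rule for \<open>\<delta>{_,_}\<close> yields
  \<open>\<delta>(E l m) = E (l+1) m + E l (m+1) + s (l \<delta>^l a \<delta>^(m+1) b - m \<delta>^(l+1) a \<delta>^m b)\<close>.
  Summing with binomial weights, Pascal's rule assembles the first two terms into the
  formula for \<open>n+1\<close>, while the \<open>s\<close>-terms cancel by the absorption identity
  \<open>C(n,l+1)(l+1) = C(n,l)(n-l)\<close>.\<close>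

lemma k_linear_add: "k_linear scale f \<Longrightarrow> f (x + y) = f x + f y"
  by (simp add: k_linear_def)

lemma k_linear_zero: "k_linear scale f \<Longrightarrow> f 0 = 0"
  using k_linear_add[of scale f 0 0] by simp

lemma k_linear_diff: "k_linear scale f \<Longrightarrow> f (x - y) = f x - f y"
  using k_linear_add[of scale f "x - y" y] by (simp add: algebra_simps)

lemma k_linear_scale: "k_linear scale f \<Longrightarrow> f (scale c x) = scale c (f x)"
  by (simp add: k_linear_def)

lemma k_linear_sum: "k_linear scale f \<Longrightarrow> f (sum g A) = (\<Sum>i\<in>A. f (g i))"
  by (induct A rule: infinite_finite_induct) (simp_all add: k_linear_zero k_linear_add)

lemma k_linear_of_nat_mult: "k_linear scale f \<Longrightarrow> f (of_nat n * x) = of_nat n * f x"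
  by (induct n) (simp_all add: k_linear_zero k_linear_add distrib_right)

lemma sum_binomial_pascal:
  fixes G :: "nat \<Rightarrow> nat \<Rightarrow> 'b::comm_ring_1"
  shows "(\<Sum>l\<le>n. of_nat (n choose l) * (G (Suc l) (n - l) + G l (Suc (n - l))))
       = (\<Sum>l\<le>Suc n. of_nat (Suc n choose l) * G l (Suc n - l))"
proof -
  have "(\<Sum>l\<le>n. of_nat (n choose l) * G l (Suc (n - l)))
      = (\<Sum>l\<le>Suc n. of_nat (n choose l) * G l (Suc n - l))"
    by (simp add: Suc_diff_le binomial_eq_0)
  also have "\<dots> = G 0 (Suc n) + (\<Sum>l\<le>n. of_nat (n choose Suc l) * G (Suc l) (n - l))"
    by (subst sum.atMost_Suc_shift) simp
  finally have right: "(\<Sum>l\<le>n. of_nat (n choose l) * G l (Suc (n - l)))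
      = G 0 (Suc n) + (\<Sum>l\<le>n. of_nat (n choose Suc l) * G (Suc l) (n - l))" .
  have "(\<Sum>l\<le>Suc n. of_nat (Suc n choose l) * G l (Suc n - l))
     = G 0 (Suc n) + (\<Sum>l\<le>n. of_nat (n choose l) * G (Suc l) (n - l))
       + (\<Sum>l\<le>n. of_nat (n choose Suc l) * G (Suc l) (n - l))"
    by (subst sum.atMost_Suc_shift) (simp add: ring_distribs sum.distrib)
  with right show ?thesis
    by (simp add: ring_distribs sum.distrib algebra_simps)
qed

lemma sum_binomial_shift_cancel:
  fixes F :: "nat \<Rightarrow> nat \<Rightarrow> 'b::comm_ring_1"
  shows "(\<Sum>l\<le>n. of_nat (n choose l)
            * (of_nat l * F l (Suc (n - l)) - of_nat (n - l) * F (Suc l) (n - l))) = 0"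
proof (cases n)
  case 0
  then show ?thesis by simp
next
  case (Suc k)
  have absorb: "(of_nat (n choose Suc l) * of_nat (Suc l) :: 'b) = of_nat (n choose l) * of_nat (n - l)"
    for l
    using binomial_absorption[of l n] binomial_absorb_comp[of n l]
    by (metis of_nat_mult mult.commute)
  have "(\<Sum>l\<le>n. of_nat (n choose l) * (of_nat l * F l (Suc (n - l))))
      = (\<Sum>l\<le>k. of_nat (n choose Suc l) * (of_nat (Suc l) * F (Suc l) (n - l)) :: 'b)"
    unfolding Suc
    by (subst sum.atMost_Suc_shift)
       (auto intro!: sum.cong simp: Suc_diff_le simp del: sum.atMost_Suc)
  also have "\<dots> = (\<Sum>l\<le>k. of_nat (n choose l) * (of_nat (n - l) * F (Suc l) (n - l)))"
    by (simp only: absorb flip: mult.assoc)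
  also have "\<dots> = (\<Sum>l\<le>n. of_nat (n choose l) * (of_nat (n - l) * F (Suc l) (n - l)))"
    unfolding Suc by simp
  finally show ?thesis
    by (simp add: right_diff_distrib sum_subtractf)
qed

definition twisted_bracket_term ::
  "('b::comm_ring_1 \<Rightarrow> 'b \<Rightarrow> 'b) \<Rightarrow> ('b \<Rightarrow> 'b) \<Rightarrow> ('b \<Rightarrow> 'b) \<Rightarrow> 'b \<Rightarrow> 'b \<Rightarrow> nat \<Rightarrow> nat \<Rightarrow> 'b" where
  "twisted_bracket_term br \<alpha> \<delta> a b l m = br ((\<delta> ^^ l) a) ((\<delta> ^^ m) b)
     + of_nat m * (\<delta> ^^ l) (\<alpha> a) * (\<delta> ^^ m) b
     - of_nat l * (\<delta> ^^ l) a * (\<delta> ^^ m) (\<alpha> b)"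

context
  fixes scale :: "'k::field \<Rightarrow> 'b::comm_ring_1 \<Rightarrow> 'b"
    and br :: "'b \<Rightarrow> 'b \<Rightarrow> 'b" and \<alpha> \<delta> :: "'b \<Rightarrow> 'b" and s :: 'k
  assumes data: "poisson_poly_data scale br \<alpha> \<delta>"
    and alpha_delta: "\<forall>a. \<alpha> (\<delta> a) = \<delta> (\<alpha> a + scale s a)"
begin

private abbreviation "E \<equiv> twisted_bracket_term br \<alpha> \<delta>"

lemma k_linear_delta: "k_linear scale \<delta>"
  using data by (simp add: poisson_poly_data_def derivation_def)

lemma alpha_funpow_delta:
  "\<alpha> ((\<delta> ^^ l) x) = (\<delta> ^^ l) (\<alpha> x) + of_nat l * scale s ((\<delta> ^^ l) x)"
proof (induct l)
  case 0
  then show ?case by simp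
next
  case (Suc l)
  have "\<alpha> ((\<delta> ^^ Suc l) x) = \<delta> (\<alpha> ((\<delta> ^^ l) x) + scale s ((\<delta> ^^ l) x))"
    using alpha_delta by simp
  also have "\<dots> = (\<delta> ^^ Suc l) (\<alpha> x) + of_nat (Suc l) * scale s ((\<delta> ^^ Suc l) x)"
    unfolding Suc using k_linear_delta
    by (simp add: k_linear_add k_linear_of_nat_mult k_linear_scale algebra_simps)
  finally show ?case .
qed

lemma delta_twisted_bracket_term:
  "\<delta> (E a b l m) = E a b (Suc l) m + E a b l (Suc m)
     + (of_nat l * scale s ((\<delta> ^^ l) a * (\<delta> ^^ Suc m) b)
        - of_nat m * scale s ((\<delta> ^^ Suc l) a * (\<delta> ^^ m) b))"
proof -
  have delta_mult: "\<And>x y. \<delta> (x * y) = \<delta> x * y + x * \<delta> y"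
    using data by (simp add: poisson_poly_data_def derivation_def)
  have delta_br: "\<And>x y. \<delta> (br x y) = br (\<delta> x) y + br x (\<delta> y) + \<alpha> x * \<delta> y - \<delta> x * \<alpha> y"
    using data by (simp add: poisson_poly_data_def)
  have scale_mult: "\<And>x y. scale s x * y = scale s (x * y)" "\<And>x y. x * scale s y = scale s (x * y)"
    using data unfolding poisson_poly_data_def poisson_algebra_def comm_algebra_def by metis+
  have "\<delta> (of_nat n) = 0" for n
    using k_linear_of_nat_mult[OF k_linear_delta, of n 1] delta_mult[of 1 1] by simp
  note delta_simps = k_linear_add[OF k_linear_delta] k_linear_diff[OF k_linear_delta]
    k_linear_of_nat_mult[OF k_linear_delta] delta_mult delta_br this
  define X Y U V where "X = (\<delta> ^^ l) a" and "Y = (\<delta> ^^ m) b"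
    and "U = (\<delta> ^^ l) (\<alpha> a)" and "V = (\<delta> ^^ m) (\<alpha> b)"
  have alpha_X: "\<alpha> X = U + of_nat l * scale s X" and alpha_Y: "\<alpha> Y = V + of_nat m * scale s Y"
    unfolding X_def Y_def U_def V_def by (rule alpha_funpow_delta)+
  have "E a b l m = br X Y + of_nat m * U * Y - of_nat l * X * V"
    by (simp add: twisted_bracket_term_def X_def Y_def U_def V_def)
  then have "\<delta> (E a b l m) = br (\<delta> X) Y + br X (\<delta> Y) + \<alpha> X * \<delta> Y - \<delta> X * \<alpha> Y
      + of_nat m * (\<delta> U * Y + U * \<delta> Y) - of_nat l * (\<delta> X * V + X * \<delta> V)"
    by (simp add: delta_simps mult.assoc)
  also have "\<dots> = E a b (Suc l) m + E a b l (Suc m)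
     + (of_nat l * scale s ((\<delta> ^^ l) a * (\<delta> ^^ Suc m) b)
        - of_nat m * scale s ((\<delta> ^^ Suc l) a * (\<delta> ^^ m) b))"
    unfolding alpha_X alpha_Y
    by (simp add: twisted_bracket_term_def X_def Y_def U_def V_def algebra_simps scale_mult)
  finally show ?thesis .
qed

lemma funpow_delta_bracket:
  "(\<delta> ^^ n) (br a b) = (\<Sum>l\<le>n. of_nat (n choose l) * E a b l (n - l))"
proof (induct n)
  case 0
  then show ?case by (simp add: twisted_bracket_term_def)
next
  case (Suc n)
  have "(\<delta> ^^ Suc n) (br a b) = (\<Sum>l\<le>n. of_nat (n choose l) * \<delta> (E a b l (n - l)))"
    using Suc k_linear_delta by (simp add: k_linear_sum k_linear_of_nat_mult)
  also have "\<dots> = (\<Sum>l\<le>n. of_nat (n choose l) * (E a b (Suc l) (n - l) + E a b l (Suc (n - l))))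
     + (\<Sum>l\<le>n. of_nat (n choose l) *
          (of_nat l * scale s ((\<delta> ^^ l) a * (\<delta> ^^ Suc (n - l)) b)
           - of_nat (n - l) * scale s ((\<delta> ^^ Suc l) a * (\<delta> ^^ (n - l)) b)))"
    by (simp add: delta_twisted_bracket_term ring_distribs sum.distrib)
  also have "\<dots> = (\<Sum>l\<le>Suc n. of_nat (Suc n choose l) * E a b l (Suc n - l))"
    using sum_binomial_shift_cancel[where F = "\<lambda>i j. scale s ((\<delta> ^^ i) a * (\<delta> ^^ j) b)"]
    by (simp add: sum_binomial_pascal)
  finally show ?case .
qed

end

theorem lemma3p6:
  fixes scale :: "'k::field_char_0 \<Rightarrow> 'b::comm_ring_1 \<Rightarrow> 'b"
    and br :: "'b \<Rightarrow> 'b \<Rightarrow> 'b" and \<alpha> \<delta> :: "'b \<Rightarrow> 'b" and s :: 'k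
  assumes "poisson_poly_data scale br \<alpha> \<delta>"
    and "\<forall>a. \<alpha> (\<delta> a) = \<delta> (\<alpha> a + scale s a)"
  shows "\<forall>a b n. (\<delta> ^^ n) (br a b) =
     (\<Sum>l\<le>n. of_nat (n choose l) *
        (br ((\<delta> ^^ l) a) ((\<delta> ^^ (n - l)) b)
         + of_nat (n - l) * (\<delta> ^^ l) (\<alpha> a) * (\<delta> ^^ (n - l)) b
         - of_nat l * (\<delta> ^^ l) a * (\<delta> ^^ (n - l)) (\<alpha> b)))"
  using funpow_delta_bracket[OF assms] by (simp add: twisted_bracket_term_def)

end
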